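(* Let $\Gamma$ be a 3-colex, $c\neq c'$ colors, $E$ a $Z$-type error on the color code on $\Gamma$, and $S$ a $Z$-stabilizer of the 3D toric code on $\Gamma^{*\setminus cc'}$. Then there is a $Z$-stabilizer $\overline S$ of the color code such that $$\delta E+\sum_{e:\,S_e\neq I}e=\delta(E\overline S),$$ where sums of edges are mod 2.
   Context: Colors are $\{r,b,g,y\}$. A 3-colex $\Gamma$ is a 3-dimensional cell complex without boundary in which every vertex is 4-valent and lies in exactly four 3-cells, and whose 3-cells are properly 4-colored: every face lies in exactly two 3-cells, which have different colors. The dual complex $\Gamma^*$ has an $i$-cell for every $(3-i)$-cell of $\Gamma$, with incidences reversed; every 3-cell of $\Gamma^*$ is a tetrahedron. A vertex of $\Gamma^*$ is given the color of the corresponding 3-cell of $\Gamma$, so the four vertices of each tetrahedron have distinct colors. An edge with endpoint colors $x,y$ is an $xy$-edge. The 3D color code on $\Gamma$ has one qubit per tetrahedron $\nu$ of $\Gamma^*$, $X$-stabilizer generators $\prod_{\nu\ni v}X_\nu$ for vertices $v$, and $Z$-stabilizer generators $B^Z_e=\prod_{\nu\supset e}Z_\nu$ for edges $e$; $Z$-stabilizers are products of the $B^Z_e$. For distinct colors $x,y$ with remaining colors $u,w$, $\pi_{xy}(\nu)$ is the unique $uw$-edge of tetrahedron $\nu$. The minor complex $\Gamma^{*\setminus cc'}$ (with $d,d'$ the remaining colors) has as vertices the $d$- and $d'$-vertices, as edges the $dd'$-edges of $\Gamma^*$, one face $f_e$ for each $cc'$-edge $e$ of $\Gamma^*$ whose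 boundary is the set of $dd'$-edges of the tetrahedra containing $e$, and one 3-cell for each vertex of color $c$ or $c'$. The 3D toric code on $\Gamma^{*\setminus cc'}$ has qubits on edges and $Z$-stabilizer generators $\prod_{t\in\partial f}Z_t$ for faces $f$; its $Z$-stabilizers are products of these. $S_e$ denotes the tensor factor of $S$ on edge $e$. The edge boundary of $E=\prod_{\nu\in\Omega}Z_\nu$ is $\delta E=\sum_{\nu\in\Omega}\sum_{\{x,y\}}\pi_{xy}(\nu)$, the sum over the six unordered pairs of distinct colors (i.e. over the six edges of $\nu$), mod 2. *)

theory Defs
  imports Main
begin

datatype color = Rc | Bc | Gc | Yc

text \<open>Pauli Z-operators (up to phase) are represented by their supports;
  multiplication is symmetric difference (addition mod 2).\<close>
definition sdiff :: "'a set \<Rightarrow> 'a set \<Rightarrow> 'a set" where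
  "sdiff A B = (A - B) \<union> (B - A)"

text \<open>The dual complex \<Gamma>* of a 3-colex, given by its coloured vertices and its set
  T of tetrahedra (each a 4-element vertex set with four distinct colours).
  Absence of boundary: every triangle of a tetrahedron (dual to an edge of \<Gamma>,
  which has exactly two endpoints) lies in exactly two tetrahedra.\<close>
definition colex_dual :: "('v \<Rightarrow> color) \<Rightarrow> 'v set set \<Rightarrow> bool" where
  "colex_dual col T \<longleftrightarrow> finite T \<and>
     (\<forall>t\<in>T. finite t \<and> card t = 4 \<and> inj_on col t) \<and>
     (\<forall>t\<in>T. \<forall>s. s \<subseteq> t \<and> card s = 3 \<longrightarrow> card {t'\<in>T. s \<subseteq> t'} = 2)"

definition edges :: "'v set set \<Rightarrow> 'v set set" where
  "edges T = {e. card e = 2 \<and> (\<exists>t\<in>T. e \<subseteq> t)}"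

definition colored_edges :: "('v \<Rightarrow> color) \<Rightarrow> 'v set set \<Rightarrow> color set \<Rightarrow> 'v set set" where
  "colored_edges col T C = {e \<in> edges T. col ` e = C}"

definition BZ :: "'v set set \<Rightarrow> 'v set \<Rightarrow> 'v set set" where
  "BZ T e = {t \<in> T. e \<subseteq> t}"

inductive_set color_Zstab :: "'v set set \<Rightarrow> 'v set set set" for T where
  cz_id: "{} \<in> color_Zstab T"
| cz_mult: "A \<in> color_Zstab T \<Longrightarrow> e \<in> edges T \<Longrightarrow> sdiff A (BZ T e) \<in> color_Zstab T"

text \<open>Edge boundary of a Z-error with support \<Omega>: the edges lying in an odd number
  of tetrahedra of \<Omega> (sum of the six edges of each tetrahedron, mod 2).\<close>
definition edge_boundary :: "'v set set \<Rightarrow> 'v set set" where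
  "edge_boundary \<Omega> = {e. card e = 2 \<and> odd (card {t \<in> \<Omega>. e \<subseteq> t})}"

text \<open>Boundary of the face f_e of the minor complex \<Gamma>*\<setminus>cc' for a cc'-edge e:
  the dd'-edges of the tetrahedra containing e.\<close>
definition face_bdry :: "('v \<Rightarrow> color) \<Rightarrow> 'v set set \<Rightarrow> color \<Rightarrow> color \<Rightarrow> 'v set \<Rightarrow> 'v set set" where
  "face_bdry col T c c' e =
     {f \<in> colored_edges col T (UNIV - {c, c'}). \<exists>t\<in>T. e \<subseteq> t \<and> f \<subseteq> t}"

inductive_set toric_Zstab :: "('v \<Rightarrow> color) \<Rightarrow> 'v set set \<Rightarrow> color \<Rightarrow> color \<Rightarrow> 'v set set set"
  for col T c c' where
  tz_id: "{} \<in> toric_Zstab col T c c'"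
| tz_mult: "A \<in> toric_Zstab col T c c' \<Longrightarrow> e \<in> colored_edges col T {c, c'} \<Longrightarrow>
            sdiff A (face_bdry col T c c' e) \<in> toric_Zstab col T c c'"

end

theory Submission
  imports Defs
begin

text \<open>Multiplying Z-operators adds their edge boundaries, so it suffices to treat one generator
  of a toric stabilizer: for a cc'-edge e the colour-code stabilizer B^Z_e has edge boundary
  exactly the face boundary of f_e. An edge f counts the tetrahedra containing e \<union> f. If f is
  disjoint from e, there is at most one such tetrahedron, and then f is its dd'-edge. If f
  shares one vertex with e, e \<union> f is a triangle, lying in 0 or 2 tetrahedra. If f = e, the
  tetrahedra around e split into pairs according to their d-vertex, each pair sharing a triangle.\<close>

lemma UNIV_color: "(UNIV :: color set) = {Rc, Bc, Gc, Yc}"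
  using color.exhaust by auto

lemma card_UNIV_color: "card (UNIV :: color set) = 4"
  unfolding UNIV_color by simp

lemma finite_color_set [simp]: "finite (X :: color set)"
  using finite_subset[of X "{Rc, Bc, Gc, Yc}"] UNIV_color by blast

lemma card_Un_disjoint_pairs:
  assumes "card e = 2" "card f = 2" "e \<inter> f = {}"
  shows "card (e \<union> f) = 4"
proof -
  have "finite e" "finite f" using assms card.infinite by fastforce+
  then show ?thesis using assms by (simp add: card_Un_disjoint)
qed

lemma card_Un_meeting_pairs:
  assumes e: "card e = 2" and f: "card f = 2" and meet: "e \<inter> f \<noteq> {}"
  shows "card (e \<union> f) = 3 \<or> f = e"
proof -
  have fin: "finite e" "finite f" using e f card.infinite by fastforce+
  then have "card (e \<union> f) + card (e \<inter> f) = 4" "card (e \<inter> f) \<noteq> 0"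
    using card_Un_Int[of e f] e f meet by auto
  moreover have "card (e \<inter> f) \<le> 2" using e fin card_mono[of e "e \<inter> f"] by simp
  moreover have "f = e" if "card (e \<inter> f) = 2"
    using that e f fin card_subset_eq[of e "e \<inter> f"] card_subset_eq[of f "e \<inter> f"] by auto
  ultimately show ?thesis by linarith
qed

lemma odd_card_sdiff_iff:
  assumes "finite X" "finite Y"
  shows "odd (card (sdiff X Y)) \<longleftrightarrow> odd (card X) \<noteq> odd (card Y)"
proof -
  have "card X = card (X \<inter> Y) + card (X - Y)" "card Y = card (X \<inter> Y) + card (Y - X)"
    using assms card_Int_Diff[of X Y] card_Int_Diff[of Y X] by (auto simp: Int_commute)
  moreover have "card (sdiff X Y) = card (X - Y) + card (Y - X)"
    unfolding sdiff_def using assms by (subst card_Un_disjoint) auto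
  ultimately show ?thesis by presburger
qed

lemma edge_boundary_sdiff:
  assumes "finite A" "finite B"
  shows "edge_boundary (sdiff A B) = sdiff (edge_boundary A) (edge_boundary B)"
proof -
  have "{t \<in> sdiff A B. e \<subseteq> t} = sdiff {t \<in> A. e \<subseteq> t} {t \<in> B. e \<subseteq> t}" for e :: "'a set"
    unfolding sdiff_def by blast
  then have "odd (card {t \<in> sdiff A B. e \<subseteq> t}) \<longleftrightarrow>
      odd (card {t \<in> A. e \<subseteq> t}) \<noteq> odd (card {t \<in> B. e \<subseteq> t})" for e
    using odd_card_sdiff_iff[of "{t \<in> A. e \<subseteq> t}" "{t \<in> B. e \<subseteq> t}"] assms by simp
  then show ?thesis unfolding edge_boundary_def sdiff_def by auto
qed

lemma color_Zstab_subset: "A \<in> color_Zstab T \<Longrightarrow> A \<subseteq> T"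
  by (induction rule: color_Zstab.induct) (auto simp: sdiff_def BZ_def)

context
  fixes col :: "'v \<Rightarrow> color" and T :: "'v set set"
  assumes dual: "colex_dual col T"
begin

lemma finite_tets: "finite T"
  using dual unfolding colex_dual_def by simp

lemma tet_finite_card_inj: "t \<in> T \<Longrightarrow> finite t \<and> card t = 4 \<and> inj_on col t"
  using dual unfolding colex_dual_def by simp

lemma card_tets_containing_triangle:
  "t \<in> T \<Longrightarrow> s \<subseteq> t \<Longrightarrow> card s = 3 \<Longrightarrow> card {t' \<in> T. s \<subseteq> t'} = 2"
  using dual unfolding colex_dual_def by blast

lemma colors_of_tet: "t \<in> T \<Longrightarrow> col ` t = UNIV"
  using tet_finite_card_inj[of t] card_UNIV_color
  by (metis card_image card_subset_eq finite_color_set subset_UNIV)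

lemma tets_containing_quadruple:
  assumes "card u = 4"
  shows "{t \<in> T. u \<subseteq> t} = (if u \<in> T then {u} else {})"
proof -
  have "u = t" if "t \<in> T" "u \<subseteq> t" for t
    using that tet_finite_card_inj[OF that(1)] assms by (metis card_subset_eq)
  then show ?thesis by auto
qed

lemma even_card_tets_containing_triangle:
  assumes "card s = 3"
  shows "even (card {t \<in> T. s \<subseteq> t})"
proof (cases "\<exists>t\<in>T. s \<subseteq> t")
  case True
  then show ?thesis using card_tets_containing_triangle assms by fastforce
next
  case False
  then have "{t \<in> T. s \<subseteq> t} = {}" by blast
  then show ?thesis by (metis card.empty even_zero)
qed

lemma even_card_tets_containing_edge:
  assumes e: "card e = 2"
  shows "even (card {t \<in> T. e \<subseteq> t})"
proof (cases "\<exists>t\<in>T. e \<subseteq> t")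
  case False
  then have "{t \<in> T. e \<subseteq> t} = {}" by blast
  then show ?thesis by (metis card.empty even_zero)
next
  case True
  then obtain t0 where t0: "t0 \<in> T" "e \<subseteq> t0" by blast
  have "card (col ` e) = 2"
    using e t0 tet_finite_card_inj[of t0] by (metis card_image inj_on_subset)
  then have "col ` e \<noteq> UNIV" using card_UNIV_color by auto
  then obtain d where d: "d \<notin> col ` e" by blast
  define W where "W = {w. \<exists>t\<in>T. e \<subseteq> t \<and> w \<in> t \<and> col w = d}"
  define F where "F w = {t \<in> T. insert w e \<subseteq> t}" for w
  \<comment> \<open>every tetrahedron around e has exactly one vertex of colour d\<close>
  have partition: "{t \<in> T. e \<subseteq> t} = (\<Union>w\<in>W. F w)"
  proof
    show "{t \<in> T. e \<subseteq> t} \<subseteq> (\<Union>w\<in>W. F w)"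
    proof
      fix t assume t: "t \<in> {t \<in> T. e \<subseteq> t}"
      then have "d \<in> col ` t" using colors_of_tet by blast
      then obtain w where "w \<in> t" "col w = d" by blast
      then show "t \<in> (\<Union>w\<in>W. F w)" using t unfolding W_def F_def by blast
    qed
  qed (auto simp: F_def)
  have "finite (\<Union>T)" using finite_tets tet_finite_card_inj by blast
  then have "finite W" unfolding W_def by (rule finite_subset[rotated]) blast
  moreover have "F i \<inter> F j = {}" if "i \<in> W" "j \<in> W" "i \<noteq> j" for i j
  proof -
    have "i = j" if "t \<in> F i" "t \<in> F j" for t
    proof -
      have "t \<in> T" "i \<in> t" "j \<in> t" using that unfolding F_def by auto
      moreover have "col i = col j" using \<open>i \<in> W\<close> \<open>j \<in> W\<close> unfolding W_def by auto
      ultimately show "i = j" using tet_finite_card_inj by (metis inj_onD)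
    qed
    then show ?thesis using \<open>i \<noteq> j\<close> by blast
  qed
  moreover have "card (F w) = 2" if "w \<in> W" for w
  proof -
    obtain t where t: "t \<in> T" "e \<subseteq> t" "w \<in> t" "col w = d"
      using \<open>w \<in> W\<close> unfolding W_def by blast
    have "w \<notin> e" using d t(4) by blast
    moreover have "finite e" using e card.infinite by fastforce
    ultimately have "card (insert w e) = 3" using e by simp
    moreover have "insert w e \<subseteq> t" using t by simp
    ultimately show ?thesis unfolding F_def using card_tets_containing_triangle t(1) by blast
  qed
  moreover have "finite (F w)" for w unfolding F_def using finite_tets by simp
  ultimately have "card {t \<in> T. e \<subseteq> t} = (\<Sum>w\<in>W. 2)"
    unfolding partition by (simp add: card_UN_disjoint)
  then show ?thesis by simp
qed

lemma mem_face_bdry_iff: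
  assumes e: "e \<in> colored_edges col T {c, c'}" and f: "card f = 2" and disj: "e \<inter> f = {}"
  shows "f \<in> face_bdry col T c c' e \<longleftrightarrow> e \<union> f \<in> T"
proof
  have "card (e \<union> f) = 4"
    using e f disj card_Un_disjoint_pairs unfolding colored_edges_def edges_def by blast
  then have "t \<in> T \<Longrightarrow> e \<union> f \<subseteq> t \<Longrightarrow> e \<union> f \<in> T" for t
    using tets_containing_quadruple[of "e \<union> f"] by (auto split: if_splits)
  then show "f \<in> face_bdry col T c c' e \<Longrightarrow> e \<union> f \<in> T"
    unfolding face_bdry_def by blast
next
  assume u: "e \<union> f \<in> T"
  have "col ` e \<inter> col ` f = {}"
    using tet_finite_card_inj[OF u] disj by (auto simp: inj_on_def)
  then have "col ` f = UNIV - {c, c'}"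
    using colors_of_tet[OF u] e unfolding colored_edges_def by (auto simp: image_Un)
  then show "f \<in> face_bdry col T c c' e"
    using u f unfolding face_bdry_def colored_edges_def edges_def by auto
qed

lemma edge_boundary_BZ:
  assumes e: "e \<in> colored_edges col T {c, c'}"
  shows "edge_boundary (BZ T e) = face_bdry col T c c' e"
proof (rule set_eqI)
  fix f :: "'v set"
  have ce: "card e = 2" and ecol: "col ` e = {c, c'}"
    using e unfolding colored_edges_def edges_def by auto
  have count: "{t \<in> BZ T e. f \<subseteq> t} = {t \<in> T. e \<union> f \<subseteq> t}" unfolding BZ_def by blast
  show "f \<in> edge_boundary (BZ T e) \<longleftrightarrow> f \<in> face_bdry col T c c' e"
  proof (cases "card f = 2")
    case False
    then show ?thesis
      unfolding edge_boundary_def face_bdry_def colored_edges_def edges_def by simp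
  next
    case cf: True
    show ?thesis
    proof (cases "e \<inter> f = {}")
      case disj: True
      have "card (e \<union> f) = 4" using ce cf disj by (rule card_Un_disjoint_pairs)
      then have "odd (card {t \<in> T. e \<union> f \<subseteq> t}) \<longleftrightarrow> e \<union> f \<in> T"
        using tets_containing_quadruple[of "e \<union> f"] by (simp del: Un_subset_iff)
      then show ?thesis
        using mem_face_bdry_iff[OF e cf disj] cf unfolding edge_boundary_def by (simp add: count)
    next
      case meet: False
      have "f \<notin> face_bdry col T c c' e"
      proof
        assume "f \<in> face_bdry col T c c' e"
        then have "col ` f \<inter> {c, c'} = {}" unfolding face_bdry_def colored_edges_def by auto
        then show False using meet ecol by blast
      qed
      moreover have "even (card {t \<in> T. e \<union> f \<subseteq> t})"
        using card_Un_meeting_pairs[OF ce cf meet] even_card_tets_containing_triangle[of "e \<union> f"]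
          even_card_tets_containing_edge[OF ce] by (auto simp del: Un_subset_iff)
      ultimately show ?thesis unfolding edge_boundary_def by (simp add: count)
    qed
  qed
qed

end

theorem lemma12:
  fixes col :: "'v \<Rightarrow> color" and T :: "'v set set" and \<Omega> :: "'v set set"
    and S :: "'v set set" and c c' :: color
  assumes "colex_dual col T"
    and "c \<noteq> c'"
    and "\<Omega> \<subseteq> T"
    and "S \<in> toric_Zstab col T c c'"
  shows "\<exists>Sb \<in> color_Zstab T. sdiff (edge_boundary \<Omega>) S = edge_boundary (sdiff \<Omega> Sb)"
  using assms(4)
proof (induction rule: toric_Zstab.induct)
  case tz_id
  show ?case using color_Zstab.cz_id by (force simp: sdiff_def)
next
  case (tz_mult A e)
  then obtain Sb where Sb: "Sb \<in> color_Zstab T"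
    and IH: "sdiff (edge_boundary \<Omega>) A = edge_boundary (sdiff \<Omega> Sb)" by blast
  have finT: "finite T" using finite_tets[OF assms(1)] .
  have "sdiff \<Omega> Sb \<subseteq> T" using color_Zstab_subset[OF Sb] assms(3) unfolding sdiff_def by blast
  then have "finite (sdiff \<Omega> Sb)" using finT by (rule finite_subset)
  have "finite (BZ T e)" using finT unfolding BZ_def by simp
  have "sdiff \<Omega> (sdiff Sb (BZ T e)) = sdiff (sdiff \<Omega> Sb) (BZ T e)"
    unfolding sdiff_def by blast
  then have "edge_boundary (sdiff \<Omega> (sdiff Sb (BZ T e)))
      = sdiff (edge_boundary (sdiff \<Omega> Sb)) (edge_boundary (BZ T e))"
    using edge_boundary_sdiff \<open>finite (sdiff \<Omega> Sb)\<close> \<open>finite (BZ T e)\<close> by simp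
  also have "\<dots> = sdiff (edge_boundary \<Omega>) (sdiff A (face_bdry col T c c' e))"
    using IH edge_boundary_BZ[OF assms(1) tz_mult.hyps(2)] unfolding sdiff_def by blast
  finally show ?case
    using color_Zstab.cz_mult[OF Sb] tz_mult.hyps(2) unfolding colored_edges_def by blast
qed

end
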